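(* Let $n=2$, let $\mathcal{D}$ be the set of strictly positive piecewise-constant functions $[0,1]\to\mathbb{R}_{>0}$, and let $\mathcal{M}$ be a truthful proportional mechanism on $\mathcal{D}\times\mathcal{D}$. Let $X_1=\mathcal{M}_1(F^1)$, $X_2=\mathcal{M}_2(F^1)$ where $F^1$ is the profile of two constant-$1$ densities (assume $X_1,X_2$ are finite unions of intervals). Fix $\varepsilon\in(0,\frac12)$ and let $F^3=(f_1^3,f_2^3)$ where $f_1^3=\frac12$ on $X_1$ and $1$ on $X_2$, and $f_2^3=\varepsilon$ on $X_1$ and $1$ on $X_2$. Then $$|\mathcal{M}_1(F^3)\cap X_1|=|\mathcal{M}_1(F^3)\cap X_2|=|\mathcal{M}_2(F^3)\cap X_1|=|\mathcal{M}_2(F^3)\cap X_2|=\tfrac14.$$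
   Context: Agent $i$'s utility for a measurable $X\subseteq[0,1]$ is $v_i(X)=\int_X f_i$; $|X|$ denotes Lebesgue measure. An allocation is a pair of disjoint measurable subsets of $[0,1]$ (not necessarily covering $[0,1]$); $\mathcal{M}_i(F)$ is agent $i$'s piece. Proportional: $v_i(\mathcal{M}_i(F))\ge\frac12 v_i([0,1])$ for each $i$ w.r.t. the reported densities. Truthful: for each agent $i$, any profile and any alternative report $f_i'$ in the domain, agent $i$'s utility (w.r.t. the true $f_i$) from the truthful report is at least that from reporting $f_i'$, the other agent's report held fixed. *)

theory Defs
  imports "HOL-Analysis.Analysis"
begin

text \<open>A density reported by an agent is a function real => real; only its values on [0,1] matter.\<close>

definition piecewise_constant_01 :: "(real \<Rightarrow> real) \<Rightarrow> bool" where
  "piecewise_constant_01 f \<longleftrightarrow>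
     (\<exists>S. finite S \<and> {0, 1} \<subseteq> S \<and> S \<subseteq> {0..1} \<and>
          (\<forall>a\<in>S. \<forall>b\<in>S. a < b \<and> {a<..<b} \<inter> S = {} \<longrightarrow>
              (\<exists>c. \<forall>x\<in>{a<..<b}. f x = c)))"

definition pc_domain :: "(real \<Rightarrow> real) set" where
  "pc_domain = {f. piecewise_constant_01 f \<and> (\<forall>x\<in>{0..1}. f x > 0)}"

definition util :: "(real \<Rightarrow> real) \<Rightarrow> real set \<Rightarrow> real" where
  "util f X = (LINT x:X|lebesgue. f x)"

definition is_allocation :: "real set \<times> real set \<Rightarrow> bool" where
  "is_allocation A \<longleftrightarrow> fst A \<in> sets lebesgue \<and> snd A \<in> sets lebesgue \<and>
     fst A \<subseteq> {0..1} \<and> snd A \<subseteq> {0..1} \<and> fst A \<inter> snd A = {}"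

type_synonym mechanism = "(real \<Rightarrow> real) \<Rightarrow> (real \<Rightarrow> real) \<Rightarrow> real set \<times> real set"

definition valid_mechanism :: "(real \<Rightarrow> real) set \<Rightarrow> mechanism \<Rightarrow> bool" where
  "valid_mechanism D M \<longleftrightarrow> (\<forall>f1\<in>D. \<forall>f2\<in>D. is_allocation (M f1 f2))"

definition proportional :: "(real \<Rightarrow> real) set \<Rightarrow> mechanism \<Rightarrow> bool" where
  "proportional D M \<longleftrightarrow> (\<forall>f1\<in>D. \<forall>f2\<in>D.
      util f1 (fst (M f1 f2)) \<ge> util f1 {0..1} / 2 \<and>
      util f2 (snd (M f1 f2)) \<ge> util f2 {0..1} / 2)"

definition truthful :: "(real \<Rightarrow> real) set \<Rightarrow> mechanism \<Rightarrow> bool" where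
  "truthful D M \<longleftrightarrow>
     (\<forall>f1\<in>D. \<forall>f1'\<in>D. \<forall>f2\<in>D. util f1 (fst (M f1 f2)) \<ge> util f1 (fst (M f1' f2))) \<and>
     (\<forall>f1\<in>D. \<forall>f2\<in>D. \<forall>f2'\<in>D. util f2 (snd (M f1 f2)) \<ge> util f2 (snd (M f1 f2')))"

definition finite_union_of_intervals :: "real set \<Rightarrow> bool" where
  "finite_union_of_intervals X \<longleftrightarrow>
     (\<exists>I. finite I \<and> (\<forall>J\<in>I. is_interval J) \<and> X = \<Union>I)"

end

theory Submission
  imports Defs
begin

text \<open>At the uniform profile proportionality forces |X1| = |X2| = 1/2. Write a_i and b_i for the
  measures of the two agents' pieces inside X_i at F3. Proportionality at F3 gives
  a1/2 + a2 \<ge> 3/8 and \<epsilon> b1 + b2 \<ge> (1 + \<epsilon>)/4, disjointness gives a_i + b_i \<le> 1/2, and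
  truthfulness gives a1 + a2 \<le> 1/2: at the profile (1, f2^3) agent 2 could report 1 and receive X2,
  so her piece has measure at least 1/2, leaving at most 1/2 to agent 1, which agent 1 cannot
  improve on by reporting f1^3 instead of 1. For 0 < \<epsilon> < 1/2 these linear constraints have
  the unique solution a_i = b_i = 1/4. Only X1 needs to be a finite union of intervals, to make
  the densities of F3 piecewise constant.\<close>

lemma is_interval_Sup_between:
  fixes J :: "real set"
  assumes "is_interval J" "x \<in> J" "y \<notin> J" "x < y"
  shows "x \<le> Sup J \<and> Sup J \<le> y"
proof -
  have bound: "\<forall>z\<in>J. z \<le> y"
  proof (rule ccontr)
    assume "\<not> (\<forall>z\<in>J. z \<le> y)"
    then obtain z where "z \<in> J" "z > y" by auto
    then have "y \<in> J" using assms unfolding is_interval_1 by (meson less_imp_le)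
    then show False using assms by simp
  qed
  have "x \<le> Sup J" using bound assms by (intro cSup_upper) (auto simp: bdd_above_def)
  moreover have "Sup J \<le> y" using bound assms by (intro cSup_least) auto
  ultimately show ?thesis by simp
qed

lemma is_interval_Inf_between:
  fixes J :: "real set"
  assumes "is_interval J" "x \<in> J" "y \<notin> J" "y < x"
  shows "y \<le> Inf J \<and> Inf J \<le> x"
proof -
  have bound: "\<forall>z\<in>J. y \<le> z"
  proof (rule ccontr)
    assume "\<not> (\<forall>z\<in>J. y \<le> z)"
    then obtain z where "z \<in> J" "z < y" by auto
    then have "y \<in> J" using assms unfolding is_interval_1 by (meson less_imp_le)
    then show False using assms by simp
  qed
  have "Inf J \<le> x" using bound assms by (intro cInf_lower) (auto simp: bdd_below_def)
  moreover have "y \<le> Inf J" using bound assms by (intro cInf_greatest) auto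
  ultimately show ?thesis by simp
qed

text \<open>The endpoints in [0,1] of the intervals making up X serve as breakpoints: strictly between
  two consecutive breakpoints no interval starts or ends, so membership in X is constant there.\<close>
lemma piecewise_constant_01_step:
  assumes "finite_union_of_intervals X"
  shows "piecewise_constant_01 (\<lambda>x. if x \<in> X then c else d)"
proof -
  obtain I where I: "finite I" "\<forall>J\<in>I. is_interval J" "X = \<Union>I"
    using assms unfolding finite_union_of_intervals_def by blast
  define S where "S = {0,1} \<union> ((\<Union>J\<in>I. {Inf J, Sup J}) \<inter> {0..1::real})"
  have S: "finite S" "{0,1} \<subseteq> S" "S \<subseteq> {0..1}" unfolding S_def using I(1) by auto
  have same_side: "y \<in> X"
    if ab: "a \<in> S" "b \<in> S" "{a<..<b} \<inter> S = {}"
      and xy: "x \<in> {a<..<b}" "y \<in> {a<..<b}" "x \<in> X" for a b x y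
  proof (rule ccontr)
    assume "y \<notin> X"
    obtain J where J: "J \<in> I" "x \<in> J" using xy I by auto
    with \<open>y \<notin> X\<close> I have "y \<notin> J" "is_interval J" by auto
    have "0 \<le> a" "b \<le> 1" using ab S by auto
    consider "x < y" | "y < x" using xy \<open>y \<notin> X\<close> by fastforce
    then show False
    proof cases
      case 1
      with J \<open>y \<notin> J\<close> \<open>is_interval J\<close> have "x \<le> Sup J \<and> Sup J \<le> y"
        by (intro is_interval_Sup_between)
      then have "Sup J \<in> {a<..<b} \<inter> S" using xy \<open>0 \<le> a\<close> \<open>b \<le> 1\<close> J unfolding S_def by auto
      then show False using ab by blast
    next
      case 2
      with J \<open>y \<notin> J\<close> \<open>is_interval J\<close> have "y \<le> Inf J \<and> Inf J \<le> x"
        by (intro is_interval_Inf_between)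
      then have "Inf J \<in> {a<..<b} \<inter> S" using xy \<open>0 \<le> a\<close> \<open>b \<le> 1\<close> J unfolding S_def by auto
      then show False using ab by blast
    qed
  qed
  show ?thesis unfolding piecewise_constant_01_def
  proof (intro exI[of _ S] conjI S ballI impI)
    fix a b assume ab: "a \<in> S" "b \<in> S" "a < b \<and> {a<..<b} \<inter> S = {}"
    let ?m = "(a + b) / 2"
    have m: "?m \<in> {a<..<b}" using ab by auto
    show "\<exists>c'. \<forall>x\<in>{a<..<b}. (if x \<in> X then c else d) = c'"
    proof (intro exI[of _ "if ?m \<in> X then c else d"] ballI)
      fix x assume x: "x \<in> {a<..<b}"
      have "x \<in> X \<longleftrightarrow> ?m \<in> X"
        using same_side[OF ab(1,2) _ x m] same_side[OF ab(1,2) _ m x] ab(3) by blast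
      then show "(if x \<in> X then c else d) = (if ?m \<in> X then c else d)" by simp
    qed
  qed
qed

lemma step_in_pc_domain:
  assumes "finite_union_of_intervals X" "c > 0" "d > 0"
  shows "(\<lambda>x. if x \<in> X then c else d) \<in> pc_domain"
  unfolding pc_domain_def using piecewise_constant_01_step[OF assms(1)] assms(2,3) by auto

lemma const_in_pc_domain:
  assumes "c > 0"
  shows "(\<lambda>_. c) \<in> pc_domain"
  unfolding pc_domain_def piecewise_constant_01_def using assms
  by (intro CollectI conjI exI[of _ "{0,1}"]) auto

lemma measure_add_le_of_disjoint:
  assumes "A \<in> sets M" "B \<in> sets M" "A \<inter> B = {}" "A \<union> B \<subseteq> S" "S \<in> fmeasurable M"
  shows "measure M A + measure M B \<le> measure M S"
proof -
  have "A \<in> fmeasurable M" "B \<in> fmeasurable M"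
    using assms by (auto intro: fmeasurableI2)
  then have "measure M (A \<union> B) = measure M A + measure M B"
    using assms(3) by (simp add: measure_Un3)
  moreover have "measure M (A \<union> B) \<le> measure M S"
    using assms by (intro measure_mono_fmeasurable) auto
  ultimately show ?thesis by simp
qed

lemma measure_eq_Int_add_Int:
  assumes X: "X1 \<in> sets M" "X2 \<in> sets M" "X1 \<inter> X2 = {}" "X1 \<union> X2 \<subseteq> S"
    and S: "S \<in> fmeasurable M" "measure M X1 + measure M X2 = measure M S"
    and Y: "Y \<in> sets M" "Y \<subseteq> S"
  shows "measure M Y = measure M (Y \<inter> X1) + measure M (Y \<inter> X2)"
proof -
  have fin: "X1 \<in> fmeasurable M" "X2 \<in> fmeasurable M" "Y \<in> fmeasurable M"
    using X S Y by (auto intro: fmeasurableI2)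
  have "measure M (Y \<inter> X1) + measure M (Y \<inter> X2) \<le> measure M Y"
    using X Y fin by (intro measure_add_le_of_disjoint) auto
  moreover have "measure M (X1 - Y) + measure M (X2 - Y) \<le> measure M (S - Y)"
    using X S Y by (intro measure_add_le_of_disjoint) (auto intro: fmeasurable_Diff)
  moreover have diff: "measure M (Xi - Y) = measure M Xi - measure M (Y \<inter> Xi)"
    if "Xi \<in> fmeasurable M" for Xi
  proof -
    have "Xi - Y = Xi - (Y \<inter> Xi)" by blast
    then show ?thesis using that Y by (simp add: measurable_measure_Diff)
  qed
  moreover have "measure M (S - Y) = measure M S - measure M Y"
    using S Y by (intro measurable_measure_Diff) auto
  ultimately show ?thesis
    using diff[OF fin(1)] diff[OF fin(2)] S(2) by linarith
qed

lemma util_step: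
  assumes "A \<in> lmeasurable" "X \<in> sets lebesgue"
  shows "util (\<lambda>x. if x \<in> X then c else d) A =
    c * measure lebesgue (A \<inter> X) + d * measure lebesgue (A - X)"
proof -
  have "(\<lambda>x. indicator A x *\<^sub>R (if x \<in> X then c else d)) =
      (\<lambda>x. c * indicator (A \<inter> X) x + d * indicator (A - X) x)"
    by (auto simp: indicator_def fun_eq_iff)
  moreover have "integrable lebesgue (indicator (A \<inter> X) :: real \<Rightarrow> real)"
    "integrable lebesgue (indicator (A - X) :: real \<Rightarrow> real)"
    using assms by (simp_all add: lmeasurable_iff_integrable[symmetric] fmeasurable_Diff
        fmeasurable_Int_fmeasurable)
  ultimately show ?thesis
    unfolding util_def set_lebesgue_integral_def by simp
qed

lemma util_one:
  assumes "Y \<in> sets lebesgue" "Y \<subseteq> {0..1}"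
  shows "util (\<lambda>_. 1) Y = measure lebesgue Y"
  using util_step[of Y "{}" 1 1] assms by (simp add: fmeasurableI2[of "{0..1}"])

lemma quarter_shares_forced:
  fixes a1 a2 b1 b2 e :: real
  assumes prop1: "3/8 \<le> a1 / 2 + a2"
    and prop2: "(1 + e) / 4 \<le> e * b1 + b2"
    and trunc: "a1 + a2 \<le> 1/2"
    and disj1: "a1 + b1 \<le> 1/2" and disj2: "a2 + b2 \<le> 1/2"
    and e: "0 < e" "e < 1/2"
  shows "a1 = 1/4 \<and> a2 = 1/4 \<and> b1 = 1/4 \<and> b2 = 1/4"
proof -
  have "b1 / 2 + b2 \<le> 3/8"
    using prop1 disj1 disj2 by linarith
  with prop2 have "(1/2 - e) * b1 \<le> (1/2 - e) * (1/4)"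
    by (simp add: algebra_simps)
  then have b1: "b1 \<le> 1/4"
    using e by (simp add: mult_le_cancel_left_pos)
  have "e * b1 \<le> e * (1/4)"
    using b1 e by (intro mult_left_mono) auto
  then have "b2 \<ge> 1/4"
    using prop2 by (simp add: field_simps)
  moreover have "a2 \<ge> 1/4"
    using prop1 trunc by linarith
  ultimately have a2: "a2 = 1/4" and b2: "b2 = 1/4"
    using disj2 by linarith+
  then have "e * b1 \<ge> e * (1/4)"
    using prop2 by (simp add: field_simps)
  then have "b1 \<ge> 1/4"
    using e by (simp add: mult_le_cancel_left_pos)
  then show ?thesis
    using prop1 trunc disj1 a2 b2 b1 by linarith
qed

locale truthful_proportional_mechanism =
  fixes M :: mechanism
  assumes valid: "valid_mechanism pc_domain M"
    and truthful: "truthful pc_domain M"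
    and proportional: "proportional pc_domain M"
begin

abbreviation X\<^sub>1 :: "real set" where "X\<^sub>1 \<equiv> fst (M (\<lambda>_. 1) (\<lambda>_. 1))"
abbreviation X\<^sub>2 :: "real set" where "X\<^sub>2 \<equiv> snd (M (\<lambda>_. 1) (\<lambda>_. 1))"

lemma allocation:
  assumes "f1 \<in> pc_domain" "f2 \<in> pc_domain"
  shows "fst (M f1 f2) \<in> sets lebesgue" "snd (M f1 f2) \<in> sets lebesgue"
    "fst (M f1 f2) \<subseteq> {0..1}" "snd (M f1 f2) \<subseteq> {0..1}" "fst (M f1 f2) \<inter> snd (M f1 f2) = {}"
  using valid assms unfolding valid_mechanism_def is_allocation_def by auto

lemma uniform_allocation:
  "X\<^sub>1 \<in> sets lebesgue" "X\<^sub>2 \<in> sets lebesgue" "X\<^sub>1 \<subseteq> {0..1}" "X\<^sub>2 \<subseteq> {0..1}" "X\<^sub>1 \<inter> X\<^sub>2 = {}"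
  using allocation const_in_pc_domain[of 1] by simp_all

lemma measure_allocation_add_le_one:
  assumes "f1 \<in> pc_domain" "f2 \<in> pc_domain"
  shows "measure lebesgue (fst (M f1 f2)) + measure lebesgue (snd (M f1 f2)) \<le> 1"
  using measure_add_le_of_disjoint[OF allocation(1,2,5)[OF assms], of "{0..1}"] allocation(3,4)[OF assms]
  by simp

lemma measure_uniform_allocation: "measure lebesgue X\<^sub>1 = 1/2" "measure lebesgue X\<^sub>2 = 1/2"
proof -
  have one: "(\<lambda>_. 1) \<in> pc_domain" by (simp add: const_in_pc_domain)
  have "measure lebesgue X\<^sub>1 \<ge> 1/2" "measure lebesgue X\<^sub>2 \<ge> 1/2"
    using proportional one util_one uniform_allocation unfolding proportional_def by force+
  with measure_allocation_add_le_one[OF one one]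
  show "measure lebesgue X\<^sub>1 = 1/2" "measure lebesgue X\<^sub>2 = 1/2" by linarith+
qed

lemma measure_split_uniform_allocation:
  assumes "Y \<in> sets lebesgue" "Y \<subseteq> {0..1}"
  shows "measure lebesgue Y = measure lebesgue (Y \<inter> X\<^sub>1) + measure lebesgue (Y \<inter> X\<^sub>2)"
  using uniform_allocation measure_uniform_allocation assms
  by (intro measure_eq_Int_add_Int[where S = "{0..1}"]) auto

lemma util_step_uniform_allocation:
  assumes "Y \<in> sets lebesgue" "Y \<subseteq> {0..1}"
  shows "util (\<lambda>x. if x \<in> X\<^sub>1 then c else 1) Y =
    c * measure lebesgue (Y \<inter> X\<^sub>1) + measure lebesgue (Y \<inter> X\<^sub>2)"
proof -
  have Y: "Y \<in> lmeasurable" using assms by (simp add: fmeasurableI2[of "{0..1}"])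
  have "Y - X\<^sub>1 = Y - (Y \<inter> X\<^sub>1)" by blast
  then have "measure lebesgue (Y - X\<^sub>1) = measure lebesgue Y - measure lebesgue (Y \<inter> X\<^sub>1)"
    using Y uniform_allocation by (simp add: measurable_measure_Diff)
  then show ?thesis
    using util_step[OF Y, of X\<^sub>1 c 1] uniform_allocation measure_split_uniform_allocation[OF assms]
    by simp
qed

lemma measure_Int_uniform_allocation_add_le_half:
  assumes "f1 \<in> pc_domain" "f2 \<in> pc_domain" "X = X\<^sub>1 \<or> X = X\<^sub>2"
  shows "measure lebesgue (fst (M f1 f2) \<inter> X) + measure lebesgue (snd (M f1 f2) \<inter> X) \<le> 1/2"
proof -
  have X: "X \<in> sets lebesgue" "X \<subseteq> {0..1}" "measure lebesgue X = 1/2"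
    using assms(3) uniform_allocation measure_uniform_allocation by auto
  have "measure lebesgue (fst (M f1 f2) \<inter> X) + measure lebesgue (snd (M f1 f2) \<inter> X) \<le> measure lebesgue X"
    using allocation[OF assms(1,2)] X
    by (intro measure_add_le_of_disjoint) (auto intro: fmeasurableI2[of "{0..1}"])
  with X(3) show ?thesis by simp
qed

lemma proportional_step_profile:
  assumes "finite_union_of_intervals X\<^sub>1" "0 < c" "0 < e"
  defines "F \<equiv> M (\<lambda>x. if x \<in> X\<^sub>1 then c else 1) (\<lambda>x. if x \<in> X\<^sub>1 then e else 1)"
  shows "(1 + c) / 4 \<le> c * measure lebesgue (fst F \<inter> X\<^sub>1) + measure lebesgue (fst F \<inter> X\<^sub>2)"
    and "(1 + e) / 4 \<le> e * measure lebesgue (snd F \<inter> X\<^sub>1) + measure lebesgue (snd F \<inter> X\<^sub>2)"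
proof -
  have dom: "(\<lambda>x. if x \<in> X\<^sub>1 then c else 1) \<in> pc_domain" "(\<lambda>x. if x \<in> X\<^sub>1 then e else 1) \<in> pc_domain"
    using assms by (simp_all add: step_in_pc_domain)
  have whole: "util (\<lambda>x. if x \<in> X\<^sub>1 then t else 1) {0..1} = (1 + t) / 2" for t
    using util_step_uniform_allocation[of "{0..1}" t] uniform_allocation
      measure_uniform_allocation by (simp add: Int_absorb1)
  have "util (\<lambda>x. if x \<in> X\<^sub>1 then c else 1) {0..1} / 2
      \<le> util (\<lambda>x. if x \<in> X\<^sub>1 then c else 1) (fst F)"
    and "util (\<lambda>x. if x \<in> X\<^sub>1 then e else 1) {0..1} / 2
      \<le> util (\<lambda>x. if x \<in> X\<^sub>1 then e else 1) (snd F)"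
    using proportional dom unfolding proportional_def F_def by blast+
  then show "(1 + c) / 4 \<le> c * measure lebesgue (fst F \<inter> X\<^sub>1) + measure lebesgue (fst F \<inter> X\<^sub>2)"
    and "(1 + e) / 4 \<le> e * measure lebesgue (snd F \<inter> X\<^sub>1) + measure lebesgue (snd F \<inter> X\<^sub>2)"
    using whole util_step_uniform_allocation allocation[OF dom] unfolding F_def by simp_all
qed

lemma measure_fst_le_half:
  assumes "finite_union_of_intervals X\<^sub>1" "f1 \<in> pc_domain" "0 < e" "e \<le> 1"
  shows "measure lebesgue (fst (M f1 (\<lambda>x. if x \<in> X\<^sub>1 then e else 1))) \<le> 1/2"
proof -
  define g where "g = (\<lambda>x::real. if x \<in> X\<^sub>1 then e else 1)"
  have one: "(\<lambda>_. 1) \<in> pc_domain" by (simp add: const_in_pc_domain)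
  have g: "g \<in> pc_domain" unfolding g_def using assms by (simp add: step_in_pc_domain)
  have "measure lebesgue (fst (M f1 g)) \<le> measure lebesgue (fst (M (\<lambda>_. 1) g))"
  proof -
    have "util (\<lambda>_. 1) (fst (M f1 g)) \<le> util (\<lambda>_. 1) (fst (M (\<lambda>_. 1) g))"
      using truthful one assms(2) g unfolding truthful_def by blast
    then show ?thesis
      using util_one allocation[OF assms(2) g] allocation[OF one g] by simp
  qed
  moreover have "1/2 \<le> util g (snd (M (\<lambda>_. 1) g))"
  proof -
    have "util g X\<^sub>2 = 1/2"
      using util_step_uniform_allocation[of X\<^sub>2 e] uniform_allocation measure_uniform_allocation
      unfolding g_def by (simp add: Int_commute Int_absorb1)
    moreover have "util g X\<^sub>2 \<le> util g (snd (M (\<lambda>_. 1) g))"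
      using truthful one g unfolding truthful_def by blast
    ultimately show ?thesis by simp
  qed
  moreover have "util g (snd (M (\<lambda>_. 1) g)) \<le> measure lebesgue (snd (M (\<lambda>_. 1) g))"
  proof -
    let ?D = "snd (M (\<lambda>_. 1) g)"
    have "e * measure lebesgue (?D \<inter> X\<^sub>1) \<le> measure lebesgue (?D \<inter> X\<^sub>1)"
      using assms(3,4) by (intro mult_left_le_one_le) auto
    then show ?thesis
      using util_step_uniform_allocation[of ?D e] allocation[OF one g]
        measure_split_uniform_allocation[of ?D] unfolding g_def by simp
  qed
  ultimately show ?thesis
    using measure_allocation_add_le_one[OF one g] unfolding g_def by linarith
qed

end

theorem proposition3:
  fixes M :: mechanism and \<epsilon> :: real
  assumes "valid_mechanism pc_domain M"
    and "truthful pc_domain M"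
    and "proportional pc_domain M"
    and "finite_union_of_intervals (fst (M (\<lambda>_. 1) (\<lambda>_. 1)))"
    and "finite_union_of_intervals (snd (M (\<lambda>_. 1) (\<lambda>_. 1)))"
    and "0 < \<epsilon>" and "\<epsilon> < 1/2"
  shows
    "let X1 = fst (M (\<lambda>_. 1) (\<lambda>_. 1)); X2 = snd (M (\<lambda>_. 1) (\<lambda>_. 1));
         f13 = (\<lambda>x. if x \<in> X1 then 1/2 else 1);
         f23 = (\<lambda>x. if x \<in> X1 then \<epsilon> else 1);
         F3 = M f13 f23
     in measure lebesgue (fst F3 \<inter> X1) = 1/4 \<and> measure lebesgue (fst F3 \<inter> X2) = 1/4 \<and>
        measure lebesgue (snd F3 \<inter> X1) = 1/4 \<and> measure lebesgue (snd F3 \<inter> X2) = 1/4"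
proof -
  interpret truthful_proportional_mechanism M
    using assms(1-3) by unfold_locales
  define f13 where "f13 = (\<lambda>x. if x \<in> X\<^sub>1 then 1/2 else 1 :: real)"
  define f23 where "f23 = (\<lambda>x. if x \<in> X\<^sub>1 then \<epsilon> else 1 :: real)"
  define A where "A = fst (M f13 f23)"
  define B where "B = snd (M f13 f23)"
  have dom: "f13 \<in> pc_domain" "f23 \<in> pc_domain"
    unfolding f13_def f23_def using assms(4,6) by (simp_all add: step_in_pc_domain)
  have "measure lebesgue A \<le> 1/2"
    using measure_fst_le_half[OF assms(4) dom(1) assms(6)] assms(7) unfolding A_def f23_def by simp
  then have "measure lebesgue (A \<inter> X\<^sub>1) + measure lebesgue (A \<inter> X\<^sub>2) \<le> 1/2"
    using measure_split_uniform_allocation allocation[OF dom] unfolding A_def by simp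
  moreover have "measure lebesgue (A \<inter> X\<^sub>1) + measure lebesgue (B \<inter> X\<^sub>1) \<le> 1/2"
    and "measure lebesgue (A \<inter> X\<^sub>2) + measure lebesgue (B \<inter> X\<^sub>2) \<le> 1/2"
    using measure_Int_uniform_allocation_add_le_half[OF dom] unfolding A_def B_def by simp_all
  moreover have "3/8 \<le> measure lebesgue (A \<inter> X\<^sub>1) / 2 + measure lebesgue (A \<inter> X\<^sub>2)"
    and "(1 + \<epsilon>) / 4 \<le> \<epsilon> * measure lebesgue (B \<inter> X\<^sub>1) + measure lebesgue (B \<inter> X\<^sub>2)"
    using proportional_step_profile[OF assms(4) _ assms(6), of "1/2"]
    unfolding A_def B_def f13_def f23_def by simp_all
  ultimately have "measure lebesgue (A \<inter> X\<^sub>1) = 1/4 \<and> measure lebesgue (A \<inter> X\<^sub>2) = 1/4 \<and>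
      measure lebesgue (B \<inter> X\<^sub>1) = 1/4 \<and> measure lebesgue (B \<inter> X\<^sub>2) = 1/4"
    using quarter_shares_forced[OF _ _ _ _ _ assms(6,7)] by blast
  then show ?thesis
    unfolding Let_def A_def B_def f13_def f23_def .
qed

end
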